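(* Let $\theta>1$ be real with $\log\theta=p/q>1$ rational, where $p,q$ are positive integers. Then $\mathcal A_\theta\subseteq [1,\frac{p^2}{6q})$; in particular $\mathcal A_\theta$ is finite.
   Context: $\lfloor x\rfloor$ is the floor of $x$; $\log$ is the natural logarithm. For real $\theta>1$ and positive integer $n$, $M'_\theta(n)=\left\lfloor 1/(\theta^{1/n}-1)\right\rfloor$, and $\mathcal A_\theta=\{n\in\mathbb N: M'_\theta(n)\neq \lfloor n/\log\theta-1/2\rfloor\}$, where $\mathbb N$ is the set of positive integers. *)

theory Defs
  imports Complex_Main
begin

definition Mprime :: "real \<Rightarrow> nat \<Rightarrow> int" where
  "Mprime \<theta> n = \<lfloor>1 / (\<theta> powr (1 / real n) - 1)\<rfloor>"

definition A_set :: "real \<Rightarrow> nat set" where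
  "A_set \<theta> = {n::nat. n \<ge> 1 \<and> Mprime \<theta> n \<noteq> \<lfloor>real n / ln \<theta> - 1/2\<rfloor>}"

end

theory Submission
  imports Defs
begin

(* Write x = ln \<theta> / n, so that \<theta> powr (1/n) = exp x and
   M'(n) = floor (1/(exp x - 1)), while the comparison value is floor y with
   y = 1/x - 1/2.  Elementary calculus gives the Bernoulli-type bounds
       1/x - 1/2 \<le> 1/(exp x - 1) < 1/x - 1/2 + x/12     (x > 0).
   If ln \<theta> = p/q then 2p*y = 2nq - p is an integer, so y lies on the grid
   (1/2p)\<int>; the open interval (y, y + 1/2p) then contains no integer, and
   any z in [y, y + 1/2p) has floor z = floor y.  For n \<ge> p^2/(6q) the error
   term x/12 = p/(12qn) is at most 1/(2p), hence M'(n) = floor y, i.e.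
   n \<notin> A_\<theta>.  So A_\<theta> lies in [1, p^2/(6q)), a bounded set of naturals.
   The file proves: a positivity principle from the mean value theorem, the
   chain of exponential inequalities, the two-sided bound, the floor-gap lemma,
   the exclusion of large n, and finally the theorem. *)

lemma pos_from_pos_deriv:
  fixes f f' :: "real \<Rightarrow> real"
  assumes "x > 0" "f 0 = 0" "\<And>t. DERIV f t :> f' t" "\<And>t. t > 0 \<Longrightarrow> f' t > 0"
  shows "f x > 0"
proof -
  obtain z where "0 < z" "z < x" "f x - f 0 = (x - 0) * f' z"
    using MVT2[of 0 x f f'] assms by blast
  then show ?thesis using assms by simp
qed

text \<open>Upper-bound chain: the derivative of each function is the previous one.\<close>
lemma exp_ineq_upper3:
  fixes x :: real assumes "x > 0" shows "exp x * (x^2 - 2*x + 2) - 2 > 0"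
proof (rule pos_from_pos_deriv[of x "\<lambda>t. exp t * (t^2 - 2*t + 2) - 2" "\<lambda>t. exp t * t^2"])
  show "DERIV (\<lambda>t. exp t * (t^2 - 2*t + 2) - 2) t :> exp t * t^2" for t
    by (auto intro!: derivative_eq_intros simp: algebra_simps power2_eq_square)
qed (use assms in auto)

lemma exp_ineq_upper2:
  fixes x :: real assumes "x > 0" shows "exp x * (x^2 - 4*x + 6) - 2*x - 6 > 0"
proof (rule pos_from_pos_deriv[of x "\<lambda>t. exp t * (t^2 - 4*t + 6) - 2*t - 6"
                                    "\<lambda>t. exp t * (t^2 - 2*t + 2) - 2"])
  show "DERIV (\<lambda>t. exp t * (t^2 - 4*t + 6) - 2*t - 6) t :> exp t * (t^2 - 2*t + 2) - 2" for t
    by (auto intro!: derivative_eq_intros simp: algebra_simps power2_eq_square)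
qed (use assms exp_ineq_upper3 in auto)

lemma exp_ineq_upper1:
  fixes x :: real assumes "x > 0" shows "(x^2 - 6*x + 12) * (exp x - 1) - 12 * x > 0"
proof (rule pos_from_pos_deriv[of x "\<lambda>t. (t^2 - 6*t + 12) * (exp t - 1) - 12 * t"
                                    "\<lambda>t. exp t * (t^2 - 4*t + 6) - 2*t - 6"])
  show "DERIV (\<lambda>t. (t^2 - 6*t + 12) * (exp t - 1) - 12 * t) t :> exp t * (t^2 - 4*t + 6) - 2*t - 6"
    for t by (auto intro!: derivative_eq_intros simp: algebra_simps power2_eq_square)
qed (use assms exp_ineq_upper2 in auto)

lemma exp_ineq_lower2:
  fixes x :: real assumes "x > 0" shows "1 + (x - 1) * exp x > 0"
proof (rule pos_from_pos_deriv[of x "\<lambda>t. 1 + (t - 1) * exp t" "\<lambda>t. t * exp t"])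
  show "DERIV (\<lambda>t. 1 + (t - 1) * exp t) t :> t * exp t" for t
    by (auto intro!: derivative_eq_intros simp: algebra_simps)
qed (use assms in auto)

lemma exp_ineq_lower1:
  fixes x :: real assumes "x > 0" shows "(2 + x) - (2 - x) * exp x > 0"
proof (rule pos_from_pos_deriv[of x "\<lambda>t. (2 + t) - (2 - t) * exp t" "\<lambda>t. 1 + (t - 1) * exp t"])
  show "DERIV (\<lambda>t. (2 + t) - (2 - t) * exp t) t :> 1 + (t - 1) * exp t" for t
    by (auto intro!: derivative_eq_intros simp: algebra_simps)
qed (use assms exp_ineq_lower2 in auto)

text \<open>The two-sided estimate of 1/(e^x - 1) by the first terms of its
  Laurent expansion 1/x - 1/2 + x/12 - ...\<close>
lemma inv_exp_minus_one_bounds: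
  fixes x :: real
  assumes x: "x > 0"
  shows "1/x - 1/2 \<le> 1/(exp x - 1)" and "1/(exp x - 1) < 1/x - 1/2 + x/12"
proof -
  have e: "exp x - 1 > 0" using x by simp
  have "(2 - x) * (exp x - 1) \<le> 2 * x" using exp_ineq_lower1[OF x] by (simp add: algebra_simps)
  then have "(2 - x) / (2*x) \<le> 1/(exp x - 1)" using e x by (simp add: divide_simps mult.commute)
  moreover have "1/x - 1/2 = (2 - x)/(2*x)" using x by (simp add: field_simps)
  ultimately show "1/x - 1/2 \<le> 1/(exp x - 1)" by simp
  have "12 * x < (x^2 - 6*x + 12) * (exp x - 1)" using exp_ineq_upper1[OF x] by simp
  then have "1/(exp x - 1) < (x^2 - 6*x + 12) / (12 * x)" using e x
    by (simp add: divide_simps mult.commute)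
  moreover have "1/x - 1/2 + x/12 = (x^2 - 6*x + 12) / (12 * x)" using x
    by (simp add: field_simps power2_eq_square)
  ultimately show "1/(exp x - 1) < 1/x - 1/2 + x/12" by simp
qed

text \<open>Floor gap: if y is a multiple of 1/d (d a positive integer), then every z
  in [y, y + 1/d) has the same integer part as y, since no integer lies
  strictly between y and y + 1/d.\<close>
lemma floor_eq_within_grid_gap:
  fixes y z :: real and d m :: int
  assumes "d > 0" and grid: "d * y = m" and "y \<le> z" and "z < y + 1 / d"
  shows "\<lfloor>z\<rfloor> = \<lfloor>y\<rfloor>"
proof (rule ccontr)
  assume "\<lfloor>z\<rfloor> \<noteq> \<lfloor>y\<rfloor>"
  moreover have "\<lfloor>y\<rfloor> \<le> \<lfloor>z\<rfloor>" using \<open>y \<le> z\<close> floor_mono by blast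
  ultimately have "y < of_int \<lfloor>z\<rfloor>" by linarith
  moreover have "of_int \<lfloor>z\<rfloor> < y + 1 / d" using \<open>z < y + 1 / d\<close> by linarith
  ultimately have "d * y < d * of_int \<lfloor>z\<rfloor>" "d * of_int \<lfloor>z\<rfloor> < d * y + 1"
    using \<open>d > 0\<close> by (simp_all add: field_simps)
  then have "(of_int m :: real) < of_int (d * \<lfloor>z\<rfloor>)" "of_int (d * \<lfloor>z\<rfloor>) < (of_int (m + 1) :: real)"
    using grid by simp_all
  then show False unfolding of_int_less_iff by linarith
qed

lemma Mprime_eq_floor_exp:
  assumes "\<theta> > 0"
  shows "Mprime \<theta> n = \<lfloor>1 / (exp (ln \<theta> / real n) - 1)\<rfloor>"
  using assms by (simp add: Mprime_def powr_def)

lemma not_in_A_set_if_large: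
  fixes \<theta> :: real and p q n :: nat
  assumes "\<theta> > 1" "p > 0" "q > 0" "ln \<theta> = real p / real q"
    and "n \<ge> 1" and large: "real p ^ 2 \<le> 6 * real q * real n"
  shows "n \<notin> A_set \<theta>"
proof -
  define x where "x = ln \<theta> / real n"
  define y where "y = real n / ln \<theta> - 1/2"
  have x_pos: "x > 0" using assms by (simp add: x_def)
  have y_eq: "1/x - 1/2 = y" by (simp add: x_def y_def)
  have "x/12 = real p / (12 * real q * real n)" using assms(4) by (simp add: x_def)
  also have "\<dots> \<le> 1 / (2 * real p)"
    using large assms(2,3,5) by (simp add: divide_simps power2_eq_square mult_ac)
  finally have error_small: "x/12 \<le> 1 / (2 * real p)" .
  have grid: "real_of_int (2 * int p) * y = of_int (2 * int n * int q - int p)"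
    using assms(2,3) unfolding y_def assms(4) by (simp add: field_simps)
  have lower: "y \<le> 1 / (exp x - 1)"
    using inv_exp_minus_one_bounds(1)[OF x_pos] y_eq by linarith
  have "1 / (exp x - 1) < y + 1 / (2 * real p)"
    using inv_exp_minus_one_bounds(2)[OF x_pos] error_small y_eq by linarith
  then have upper: "1 / (exp x - 1) < y + 1 / real_of_int (2 * int p)" by simp
  have "Mprime \<theta> n = \<lfloor>1 / (exp x - 1)\<rfloor>"
    using Mprime_eq_floor_exp[of \<theta> n] assms(1) unfolding x_def by simp
  also have "\<dots> = \<lfloor>y\<rfloor>"
    using floor_eq_within_grid_gap[OF _ grid lower upper] assms(2) by simp
  finally have "Mprime \<theta> n = \<lfloor>real n / ln \<theta> - 1/2\<rfloor>" unfolding y_def .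
  then show ?thesis by (simp add: A_set_def)
qed

lemma finite_nat_below_real: "finite {n::nat. P n \<and> real n < c}"
proof (rule finite_subset)
  show "{n::nat. P n \<and> real n < c} \<subseteq> {..nat \<lceil>c\<rceil>}"
    by (auto simp: le_nat_iff le_ceiling_iff)
qed simp

theorem theorem2:
  fixes \<theta> :: real and p q :: nat
  assumes "\<theta> > 1" and "p > 0" and "q > 0"
    and "ln \<theta> = real p / real q" and "ln \<theta> > 1"
  shows "A_set \<theta> \<subseteq> {n. 1 \<le> real n \<and> real n < real p ^ 2 / (6 * real q)} \<and> finite (A_set \<theta>)"
proof -
  have bound: "A_set \<theta> \<subseteq> {n. 1 \<le> real n \<and> real n < real p ^ 2 / (6 * real q)}"
  proof
    fix n assume n_in: "n \<in> A_set \<theta>"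
    then have "n \<ge> 1" by (simp add: A_set_def)
    moreover have "\<not> real p ^ 2 \<le> 6 * real q * real n"
      using not_in_A_set_if_large[OF assms(1-4) \<open>n \<ge> 1\<close>] n_in by blast
    then have "real n < real p ^ 2 / (6 * real q)"
      using assms(3) by (simp add: field_simps)
    ultimately show "n \<in> {n. 1 \<le> real n \<and> real n < real p ^ 2 / (6 * real q)}" by simp
  qed
  then show ?thesis using finite_subset[OF bound finite_nat_below_real] by blast
qed

end
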